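(* Let $G$ be a graph with $L(G)=2l(G)$. Let $F_L, F_l$ be maximum matchings of $G$ with $\nu(G\setminus F_L)=L(G)$ and $\nu(G\setminus F_l)=l(G)$, and let $H_L$ be any maximum matching of $G\setminus F_L$. Then: (c1) $F_l\setminus F_L\subseteq H_L$; (c2) $H_L\setminus F_l$ is a maximum matching of $G\setminus F_l$; (c3) $F_L\setminus F_l$ is a maximum matching of $G\setminus F_l$.
   Context: Graphs are finite, undirected, without loops or multiple edges. $\nu(G)$ denotes the maximum size of a matching of $G$; a matching is maximum if it has $\nu(G)$ edges. For $F\subseteq E(G)$, $G\setminus F$ is the graph with vertex set $V(G)$ and edge set $E(G)\setminus F$. Define $L(G)=\max\{\nu(G\setminus F): F \text{ a maximum matching of } G\}$ and $l(G)=\min\{\nu(G\setminus F): F \text{ a maximum matching of } G\}$. *)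

theory Defs
  imports Main
begin

text \<open>A finite simple graph on vertex set V with edge set E: every edge is a
  2-element subset of V (so no loops; multiple edges impossible since E is a set).\<close>
definition graph :: "'a set \<Rightarrow> 'a set set \<Rightarrow> bool" where
  "graph V E \<longleftrightarrow> finite V \<and> (\<forall>e\<in>E. e \<subseteq> V \<and> card e = 2)"

definition matching :: "'a set set \<Rightarrow> 'a set set \<Rightarrow> bool" where
  "matching E M \<longleftrightarrow> M \<subseteq> E \<and> (\<forall>e1\<in>M. \<forall>e2\<in>M. e1 \<noteq> e2 \<longrightarrow> e1 \<inter> e2 = {})"

text \<open>nu(G): maximum size of a matching. (G minus F has the same vertex set and
  edge set E - F; matchings depend only on the edge set.)\<close>
definition nu :: "'a set set \<Rightarrow> nat" where
  "nu E = Max {card M | M. matching E M}"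

definition max_matching :: "'a set set \<Rightarrow> 'a set set \<Rightarrow> bool" where
  "max_matching E M \<longleftrightarrow> matching E M \<and> card M = nu E"

definition L_num :: "'a set set \<Rightarrow> nat" where
  "L_num E = Max {nu (E - F) | F. max_matching E F}"

definition l_num :: "'a set set \<Rightarrow> nat" where
  "l_num E = Min {nu (E - F) | F. max_matching E F}"

end

theory Submission
  imports Defs
begin

text \<open>
  Write l = l(G).  Since F_l and F_L are both maximum matchings,
  |F_L - F_l| = |F_l - F_L|.  The sets H_L - F_l and F_L - F_l are matchings of
  G - F_l, so each has at most nu(G - F_l) = l edges.  On the other hand
  |H_L| = L(G) = 2l, and since H_L avoids F_L we have H_L \<inter> F_l \<subseteq> F_l - F_L, so
    2l = |H_L \<inter> F_l| + |H_L - F_l| \<le> |F_l - F_L| + l = |F_L - F_l| + l \<le> 2l.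
  Every inequality is therefore an equality, which gives (c1)-(c3) at once.
\<close>

lemma graph_finite_edges:
  assumes "graph V E"
  shows "finite E"
proof -
  have "E \<subseteq> Pow V" using assms unfolding graph_def by auto
  thus ?thesis using assms unfolding graph_def by (meson finite_Pow_iff finite_subset)
qed

lemma matching_finite: "finite E \<Longrightarrow> matching E M \<Longrightarrow> finite M"
  unfolding matching_def by (auto intro: finite_subset)

lemma matching_le_nu:
  assumes "finite E" "matching E M"
  shows "card M \<le> nu E"
proof -
  have "{card M | M. matching E M} \<subseteq> card ` Pow E"
    unfolding matching_def by auto
  moreover have "finite (card ` Pow E)" using assms(1) by simp
  ultimately have "finite {card M | M. matching E M}"
    by (rule finite_subset)
  thus ?thesis unfolding nu_def using assms(2) by (auto intro: Max_ge)
qed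

lemma matching_restrict:
  assumes "matching E' M" "E' \<subseteq> E"
  shows "matching (E - F) (M - F)"
  using assms unfolding matching_def by blast

lemma card_Diff_swap:
  assumes "finite A" "finite B" "card A = card B"
  shows "card (A - B) = card (B - A)"
proof -
  have "card (A - B) = card A - card (A \<inter> B)"
    using assms(1) by (simp add: card_Diff_subset_Int)
  also have "\<dots> = card B - card (B \<inter> A)"
    using assms(3) by (simp add: Int_commute)
  also have "\<dots> = card (B - A)"
    using assms(2) by (simp add: card_Diff_subset_Int)
  finally show ?thesis .
qed

lemma tight_count:
  fixes H F S :: "'b set" and k :: nat
  assumes "finite H" "finite S" "H \<inter> F \<subseteq> S"
    and "card H = 2 * k" "card (H - F) \<le> k" "card S \<le> k"
  shows "S \<subseteq> H" "card (H - F) = k" "card S = k"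
proof -
  have split: "card H = card (H \<inter> F) + card (H - F)"
    using card_Int_Diff[OF assms(1)] by simp
  have "card (H \<inter> F) \<le> card S" using card_mono[OF assms(2,3)] .
  with split assms(4-6) show "card (H - F) = k" "card S = k"
    by linarith+
  from split assms(4-6) \<open>card (H \<inter> F) \<le> card S\<close>
  have inter_eq: "card (H \<inter> F) = card S" by linarith
  have "H \<inter> F = S" using card_subset_eq[OF assms(2,3) inter_eq] .
  thus "S \<subseteq> H" by blast
qed

theorem theorem2:
  fixes V :: "'a set" and E FL Fl HL :: "'a set set"
  assumes "graph V E"
    and "L_num E = 2 * l_num E"
    and "max_matching E FL" and "nu (E - FL) = L_num E"
    and "max_matching E Fl" and "nu (E - Fl) = l_num E"
    and "max_matching (E - FL) HL"
  shows "Fl - FL \<subseteq> HL \<and> max_matching (E - Fl) (HL - Fl) \<and> max_matching (E - Fl) (FL - Fl)"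
proof -
  have fin: "finite E" using graph_finite_edges[OF assms(1)] .
  have FL: "matching E FL" "card FL = nu E"
    and Fl: "matching E Fl" "card Fl = nu E"
    and HL: "matching (E - FL) HL" "card HL = 2 * l_num E"
    using assms(2-5,7) unfolding max_matching_def by auto
  have HL_rest: "matching (E - Fl) (HL - Fl)"
    using matching_restrict[OF HL(1)] by blast
  have FL_rest: "matching (E - Fl) (FL - Fl)"
    using matching_restrict[OF FL(1)] by blast
  have HL_avoids: "HL \<inter> Fl \<subseteq> Fl - FL"
    using HL(1) unfolding matching_def by blast
  have swap: "card (Fl - FL) = card (FL - Fl)"
    using card_Diff_swap FL Fl fin matching_finite by metis
  have "card (HL - Fl) \<le> l_num E" "card (Fl - FL) \<le> l_num E"
    using matching_le_nu[OF _ HL_rest] matching_le_nu[OF _ FL_rest] fin assms(6) swap by auto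
  from tight_count[OF _ _ HL_avoids HL(2) this]
  have "Fl - FL \<subseteq> HL" "card (HL - Fl) = l_num E" "card (FL - Fl) = l_num E"
    using matching_finite[OF _ HL(1)] matching_finite[OF fin Fl(1)] fin swap by auto
  thus ?thesis
    using HL_rest FL_rest assms(6) unfolding max_matching_def by simp
qed

end
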